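(* Let $A$ be a commutative $\mathbb F_p$-algebra, $B=A[z_1,\ldots,z_n]$, $a_1,\ldots,a_n\in A$ a regular sequence in $A$, $\mathfrak a=Aa_1+\cdots+Aa_n$, and $\mathcal D:B^n\to B$ the $A$-linear map $\mathcal D(h_1,\ldots,h_n)=\sum_{i=1}^n(\partial_{z_i}h_i-a_ih_i)$. Let $f=\sum_r c_rz^r\in B$ with $c_r\in A$ (where $z^r=z_1^{r_1}\cdots z_n^{r_n}$). If $f^p\in\mathrm{Im}\,\mathcal D$, then $c_r^p\in\mathfrak a$ for all $r$.
   Context: $\partial_{z_i}$ denotes the formal partial derivative with respect to $z_i$ on $B$. *)

theory Defs
  imports Main "HOL-Library.Poly_Mapping" "HOL-Computational_Algebra.Primes"
begin

text \<open>Polynomials over a commutative ring 'a in variables z_0, z_1, ... are represented as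
  finitely supported maps from monomials (exponent vectors nat =>0 nat) to coefficients.
  A polynomial lies in B = A[z_0,...,z_{n-1}] iff all its monomials only involve variables < n.\<close>

type_synonym 'a mpoly = "(nat \<Rightarrow>\<^sub>0 nat) \<Rightarrow>\<^sub>0 'a"

definition in_vars :: "nat \<Rightarrow> ((nat \<Rightarrow>\<^sub>0 nat) \<Rightarrow>\<^sub>0 'a::zero) \<Rightarrow> bool" where
  "in_vars n f \<longleftrightarrow> (\<forall>m \<in> Poly_Mapping.keys f. Poly_Mapping.keys (m::nat \<Rightarrow>\<^sub>0 nat) \<subseteq> {..<n})"

definition const_mp :: "'a::zero \<Rightarrow> 'a mpoly" where
  "const_mp c = Poly_Mapping.single 0 c"

definition pdiff :: "nat \<Rightarrow> 'a::comm_ring_1 mpoly \<Rightarrow> 'a mpoly" where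
  "pdiff i h = (\<Sum>m\<in>Poly_Mapping.keys h. Poly_Mapping.single (m - Poly_Mapping.single i 1)
                                   (of_nat (Poly_Mapping.lookup m i) * Poly_Mapping.lookup h m))"

definition D_map :: "nat \<Rightarrow> (nat \<Rightarrow> 'a::comm_ring_1) \<Rightarrow> (nat \<Rightarrow> 'a mpoly) \<Rightarrow> 'a mpoly" where
  "D_map n a h = (\<Sum>i<n. pdiff i (h i) - const_mp (a i) * h i)"

definition gen_ideal :: "(nat \<Rightarrow> 'a::comm_ring_1) \<Rightarrow> nat \<Rightarrow> 'a set" where
  "gen_ideal a k = {x. \<exists>r. x = (\<Sum>j<k. r j * a j)}"

definition regular_seq :: "(nat \<Rightarrow> 'a::comm_ring_1) \<Rightarrow> nat \<Rightarrow> bool" where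
  "regular_seq a n \<longleftrightarrow>
     (\<forall>i<n. \<forall>x. x * a i \<in> gen_ideal a i \<longrightarrow> x \<in> gen_ideal a i) \<and> 1 \<notin> gen_ideal a n"

end

theory Submission
  imports Defs
begin

(* Fix an exponent vector r.  Pair polynomials with the A-valued weight
   w_r(m) = prod_{j<n} (m_j mod p)! * a_j^(p-1-(m_j mod p))   if  m_j div p = r_j for all j,
   w_r(m) = 0                                                  otherwise,
   i.e. lambda_r(F) = sum_m F_m * w_r(m).  Two computations drive the proof:
   (1) lambda_r maps the image of D into the ideal (a_0^p, ..., a_{n-1}^p): the coefficient of
       (h_i)_m in lambda_r(d/dz_i h_i - a_i h_i) is m_i w_r(m - e_i) - a_i w_r(m), which is 0 or a
       multiple of a_i^p (this uses char A = p);
   (2) by the Frobenius identity f^p = sum_m c_m^p z^(p m), so lambda_r(f^p) = c_r^p prod_j a_j^(p-1).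
   Hence c_r^p prod_j a_j^(p-1) lies in (a_j^p), and the colon identity
   (a_0^e, ..., a_{n-1}^e) : prod_j a_j^(e-1) = (a_0, ..., a_{n-1}) for regular sequences, e >= 2,
   yields c_r^p in (a_0, ..., a_{n-1}).
   The argument does not need the hypotheses that f and the h_i only involve z_0, ..., z_{n-1}. *)

lemma gen_ideal_zero: "0 \<in> gen_ideal s k"
  unfolding gen_ideal_def by (auto intro: exI[of _ "\<lambda>_. 0"])

lemma gen_ideal_add: "x \<in> gen_ideal s k \<Longrightarrow> y \<in> gen_ideal s k \<Longrightarrow> x + y \<in> gen_ideal s k"
proof -
  assume "x \<in> gen_ideal s k" "y \<in> gen_ideal s k"
  then obtain c d where "x = (\<Sum>j<k. c j * s j)" "y = (\<Sum>j<k. d j * s j)"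
    unfolding gen_ideal_def by blast
  then have "x + y = (\<Sum>j<k. (c j + d j) * s j)" by (simp add: sum.distrib distrib_right)
  then show ?thesis unfolding gen_ideal_def by (auto intro!: exI[of _ "\<lambda>j. c j + d j"])
qed

lemma gen_ideal_mult: "x \<in> gen_ideal s k \<Longrightarrow> c * x \<in> gen_ideal s k"
proof -
  assume "x \<in> gen_ideal s k"
  then obtain d where "x = (\<Sum>j<k. d j * s j)" unfolding gen_ideal_def by blast
  then have "c * x = (\<Sum>j<k. (c * d j) * s j)" by (simp add: sum_distrib_left mult.assoc)
  then show ?thesis unfolding gen_ideal_def by (auto intro!: exI[of _ "\<lambda>j. c * d j"])
qed

lemma gen_ideal_diff: "x \<in> gen_ideal s k \<Longrightarrow> y \<in> gen_ideal s k \<Longrightarrow> x - y \<in> gen_ideal s k"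
  using gen_ideal_add[of x s k "(-1) * y"] gen_ideal_mult[of y s k "-1"] by simp

lemma gen_ideal_generator: "j < k \<Longrightarrow> c * s j \<in> gen_ideal s k"
proof -
  assume "j < k"
  have "(\<Sum>i<k. (if i = j then c else 0) * s i) = (\<Sum>i<k. if i = j then c * s i else 0)"
    by (rule sum.cong) auto
  then have "c * s j = (\<Sum>i<k. (if i = j then c else 0) * s i)"
    using \<open>j < k\<close> by (simp add: sum.delta)
  then show ?thesis unfolding gen_ideal_def by (auto intro!: exI[of _ "\<lambda>i. if i = j then c else 0"])
qed

lemma gen_ideal_sum:
  "finite S \<Longrightarrow> (\<And>i. i \<in> S \<Longrightarrow> g i \<in> gen_ideal s k) \<Longrightarrow> sum g S \<in> gen_ideal s k"
  by (induction S rule: finite_induct) (auto intro: gen_ideal_zero gen_ideal_add)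

lemma gen_ideal_least:
  assumes "\<And>j. j < k \<Longrightarrow> t j \<in> gen_ideal s k'" and "x \<in> gen_ideal t k"
  shows "x \<in> gen_ideal s k'"
proof -
  obtain c where "x = (\<Sum>j<k. c j * t j)" using assms(2) unfolding gen_ideal_def by blast
  then show ?thesis by (auto intro!: gen_ideal_sum gen_ideal_mult assms(1))
qed

lemma gen_ideal_mono: "k \<le> k' \<Longrightarrow> x \<in> gen_ideal s k \<Longrightarrow> x \<in> gen_ideal s k'"
  using gen_ideal_least[of k s s k' x] gen_ideal_generator[of _ k' 1 s] by simp

lemma gen_ideal_cong: "(\<And>j. j < k \<Longrightarrow> s j = t j) \<Longrightarrow> gen_ideal s k = gen_ideal t k"
  unfolding gen_ideal_def by (metis (no_types, lifting) lessThan_iff sum.cong)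

lemma gen_ideal_replace_multiple:
  "x \<in> gen_ideal (s(m := b * s m)) k \<Longrightarrow> x \<in> gen_ideal s k"
  by (rule gen_ideal_least) (auto simp: gen_ideal_generator gen_ideal_generator[of _ k 1, simplified])

lemma gen_ideal_mult_into_replaced:
  assumes "m < i" and "c \<in> gen_ideal s i"
  shows "c * b \<in> gen_ideal (s(m := s m * b)) i"
proof -
  obtain y where "c = (\<Sum>j<i. y j * s j)" using assms(2) unfolding gen_ideal_def by blast
  then have c: "c * b = (\<Sum>j<i. y j * (s j * b))" by (simp add: sum_distrib_right sum_distrib_left mult_ac)
  have "y j * (s j * b) \<in> gen_ideal (s(m := s m * b)) i" if "j < i" for j
    using gen_ideal_generator[OF that, of "y j" "s(m := s m * b)"]
      gen_ideal_generator[OF that, of "y j * b" "s(m := s m * b)"]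
    by (cases "j = m") (simp_all add: mult_ac)
  then show ?thesis unfolding c by (auto intro: gen_ideal_sum)
qed

definition regular_from :: "(nat \<Rightarrow> 'a::comm_ring_1) \<Rightarrow> nat \<Rightarrow> nat \<Rightarrow> bool" where
  "regular_from s m k \<longleftrightarrow>
     (\<forall>i. m \<le> i \<longrightarrow> i < k \<longrightarrow> (\<forall>x. x * s i \<in> gen_ideal s i \<longrightarrow> x \<in> gen_ideal s i))"

lemma regular_fromD:
  "regular_from s m k \<Longrightarrow> m \<le> i \<Longrightarrow> i < k \<Longrightarrow> x * s i \<in> gen_ideal s i \<Longrightarrow> x \<in> gen_ideal s i"
  unfolding regular_from_def by blast

lemma regular_from_mono: "regular_from s m k \<Longrightarrow> k' \<le> k \<Longrightarrow> regular_from s m k'"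
  unfolding regular_from_def by auto

lemma regular_relation_coeff:
  assumes "regular_from s m k" "(\<Sum>j<k. \<xi> j * s j) \<in> gen_ideal s m" "m \<le> j" "j < k"
  shows "\<xi> j \<in> gen_ideal s k"
  using assms
proof (induction k arbitrary: \<xi> j)
  case 0
  then show ?case by simp
next
  case (Suc k)
  have mk: "m \<le> k" using Suc.prems by simp
  define \<sigma> where "\<sigma> = (\<Sum>j<k. \<xi> j * s j)"
  have \<sigma>: "\<sigma> \<in> gen_ideal s k" unfolding \<sigma>_def gen_ideal_def by blast
  have "\<sigma> + \<xi> k * s k \<in> gen_ideal s k"
    using gen_ideal_mono[OF mk Suc.prems(2)] by (simp add: \<sigma>_def)
  then have "\<xi> k * s k \<in> gen_ideal s k" using gen_ideal_diff[OF _ \<sigma>] by fastforce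
  then have \<xi>k: "\<xi> k \<in> gen_ideal s k" using Suc.prems(1) mk by (auto dest: regular_fromD)
  then obtain \<eta> where \<eta>: "\<xi> k = (\<Sum>j<k. \<eta> j * s j)" unfolding gen_ideal_def by blast
  text \<open>Absorb the last term into the others: \<open>\<xi>' j = \<xi> j + \<eta> j * s k\<close>.\<close>
  define \<xi>' where "\<xi>' j = \<xi> j + \<eta> j * s k" for j
  have "(\<Sum>j<k. \<xi>' j * s j) = \<sigma> + (\<Sum>j<k. \<eta> j * s j) * s k"
    unfolding \<xi>'_def \<sigma>_def
    by (simp add: sum.distrib sum_distrib_right sum_distrib_left distrib_right distrib_left mult_ac)
  also have "\<dots> = (\<Sum>j<Suc k. \<xi> j * s j)" using \<eta> by (simp add: \<sigma>_def)
  finally have "(\<Sum>j<k. \<xi>' j * s j) \<in> gen_ideal s m" using Suc.prems(2) by simp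
  then have IH: "\<And>j. m \<le> j \<Longrightarrow> j < k \<Longrightarrow> \<xi>' j \<in> gen_ideal s k"
    using Suc.IH[OF regular_from_mono[OF Suc.prems(1)]] by auto
  show ?case
  proof (cases "j = k")
    case True
    then show ?thesis using gen_ideal_mono[OF _ \<xi>k] by simp
  next
    case False
    then have "j < k" using Suc.prems by simp
    then have "\<xi>' j \<in> gen_ideal s (Suc k)" using IH Suc.prems gen_ideal_mono[of k "Suc k"] by auto
    moreover have "\<eta> j * s k \<in> gen_ideal s (Suc k)" by (rule gen_ideal_generator) simp
    ultimately show ?thesis using gen_ideal_diff by (fastforce simp: \<xi>'_def)
  qed
qed

lemma non_zero_divisor_power:
  fixes b :: "'a::comm_monoid_mult"
  assumes "\<And>x. x * b \<in> I \<Longrightarrow> x \<in> I"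
  shows "x * b ^ \<nu> \<in> I \<Longrightarrow> x \<in> I"
proof (induction \<nu> arbitrary: x)
  case 0 then show ?case by simp
next
  case (Suc \<nu>)
  then have "(x * b ^ \<nu>) * b \<in> I" by (simp add: mult_ac)
  then show ?case using assms Suc.IH by blast
qed

lemma regular_power_step_above:
  fixes s :: "nat \<Rightarrow> 'a::comm_ring_1" and m \<nu> :: nat
  defines "s\<nu> \<equiv> s(m := s m ^ \<nu>)" and "s' \<equiv> s(m := s m ^ Suc \<nu>)"
  assumes reg: "regular_from s m k" and reg\<nu>: "regular_from s\<nu> m k" and \<nu>: "1 \<le> \<nu>"
    and mi: "m < i" and ik: "i < k" and x: "x * s i \<in> gen_ideal s' i"
  shows "x \<in> gen_ideal s' i"
proof -
  have s'_eq: "s' = s\<nu>(m := s m * s\<nu> m)" by (simp add: s'_def s\<nu>_def)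
  have si: "s\<nu> i = s i" "s' i = s i" using mi by (simp_all add: s\<nu>_def s'_def)
  have "x * s\<nu> i \<in> gen_ideal s\<nu> i"
    using x gen_ideal_replace_multiple[of _ s\<nu> m "s m"] by (simp add: s'_eq si)
  then have "x \<in> gen_ideal s\<nu> i" by (rule regular_fromD[OF reg\<nu> less_imp_le[OF mi] ik])
  then obtain \<eta> where \<eta>: "x = (\<Sum>j<i. \<eta> j * s\<nu> j)" unfolding gen_ideal_def by blast
  obtain y where y: "x * s i = (\<Sum>j<i. y j * s' j)" using x unfolding gen_ideal_def by auto
  text \<open>Comparing both expressions of \<open>x * s i\<close> gives a relation among the \<open>s\<nu> j\<close>.\<close>
  define \<xi> where "\<xi> j = (if j = m then s i * \<eta> m - s m * y m else s i * \<eta> j - y j)" for j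
  have \<xi>_term: "\<xi> j * s\<nu> j = s i * (\<eta> j * s\<nu> j) - y j * s' j" for j
    by (cases "j = m") (simp_all add: \<xi>_def s\<nu>_def s'_def algebra_simps)
  have "(\<Sum>j<i. \<xi> j * s\<nu> j) = s i * x - x * s i"
    unfolding \<xi>_term sum_subtractf \<eta> sum_distrib_left y[symmetric] by simp
  then have "\<xi> m \<in> gen_ideal s\<nu> i"
    using regular_relation_coeff[OF regular_from_mono[OF reg\<nu>], of i \<xi> m] mi ik
    by (simp add: gen_ideal_zero)
  moreover have "s\<nu> = s(m := s m ^ (\<nu> - 1) * s m)"
    using \<nu> by (cases \<nu>) (simp_all add: s\<nu>_def mult.commute)
  ultimately have "s i * \<eta> m - s m * y m \<in> gen_ideal s i"
    using gen_ideal_replace_multiple[of _ s m "s m ^ (\<nu> - 1)" i] by (simp add: \<xi>_def)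
  moreover have "s m * y m \<in> gen_ideal s i"
    using gen_ideal_generator[OF mi, of "y m" s] by (simp add: mult.commute)
  ultimately have "\<eta> m * s i \<in> gen_ideal s i" using gen_ideal_add by (fastforce simp: mult.commute)
  then have "\<eta> m \<in> gen_ideal s i" by (rule regular_fromD[OF reg less_imp_le[OF mi] ik])
  then have \<eta>m: "\<eta> m * s\<nu> m \<in> gen_ideal s' i"
    using gen_ideal_mult_into_replaced[OF mi, of "\<eta> m" s "s m ^ \<nu>"] by (simp add: s\<nu>_def s'_def)
  have "\<eta> j * s\<nu> j \<in> gen_ideal s' i" if "j < i" for j
    using \<eta>m gen_ideal_generator[OF that, of "\<eta> j" s']
    by (cases "j = m") (simp_all add: s\<nu>_def s'_def)
  then show ?thesis unfolding \<eta> by (auto intro: gen_ideal_sum)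
qed

lemma regular_power:
  assumes reg: "regular_from s m k" and "1 \<le> \<nu>"
  shows "regular_from (s(m := s m ^ \<nu>)) m k"
  using assms(2)
proof (induction \<nu> rule: dec_induct)
  case base
  then show ?case using reg by simp
next
  case (step \<nu>)
  show ?case unfolding regular_from_def
  proof (intro allI impI)
    fix i x assume mi: "m \<le> i" and ik: "i < k"
      and x: "x * (s(m := s m ^ Suc \<nu>)) i \<in> gen_ideal (s(m := s m ^ Suc \<nu>)) i"
    show "x \<in> gen_ideal (s(m := s m ^ Suc \<nu>)) i"
    proof (cases "i = m")
      case True
      have "gen_ideal (s(m := s m ^ Suc \<nu>)) m = gen_ideal s m" by (rule gen_ideal_cong) simp
      then show ?thesis
        using x True non_zero_divisor_power[of "s m" "gen_ideal s m" x "Suc \<nu>"] reg ik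
        by (auto dest: regular_fromD)
    next
      case False
      then show ?thesis using regular_power_step_above[OF reg step.IH step.hyps(1) _ ik] mi x by simp
    qed
  qed
qed

lemma regular_powers:
  assumes reg: "regular_from a 0 n" and E: "\<And>j. j < n \<Longrightarrow> 1 \<le> E j"
  shows "regular_from (\<lambda>j. a j ^ E j) 0 n"
proof -
  text \<open>\<open>S m\<close> raises exactly the members from position \<open>m\<close> on; descend from \<open>m = n\<close>.\<close>
  define S where "S m = (\<lambda>j. if m \<le> j then a j ^ E j else a j)" for m
  have "regular_from (S m) m n" if "m \<le> n" for m
    using that
  proof (induction m rule: inc_induct)
    case base
    then show ?case by (simp add: regular_from_def)
  next
    case (step m)
    have "regular_from (S (Suc m)) m n" unfolding regular_from_def
    proof (intro allI impI)
      fix i x assume "m \<le> i" "i < n" and x: "x * S (Suc m) i \<in> gen_ideal (S (Suc m)) i"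
      show "x \<in> gen_ideal (S (Suc m)) i"
      proof (cases "i = m")
        case True
        have "gen_ideal (S (Suc m)) m = gen_ideal a m" by (rule gen_ideal_cong) (simp add: S_def)
        then show ?thesis using x reg \<open>i < n\<close> True by (auto simp: S_def dest: regular_fromD)
      next
        case False
        then show ?thesis using regular_fromD[OF step.IH _ \<open>i < n\<close> x] \<open>m \<le> i\<close> by simp
      qed
    qed
    moreover have "(S (Suc m))(m := S (Suc m) m ^ E m) = S m"
      by (rule ext) (auto simp: S_def)
    ultimately show ?case using regular_power[of "S (Suc m)" m n "E m"] E step.hyps by simp
  qed
  from this[of 0] show ?thesis by (simp add: S_def)
qed

lemma colon_step:
  fixes a :: "nat \<Rightarrow> 'a::comm_ring_1"
  assumes reg: "regular_from a 0 n" and e: "2 \<le> e" and kn: "k < n"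
    and t_def: "\<And>k. t k = (\<lambda>j. if j < k then a j ^ e else a j)"
    and x: "x * a k ^ (e - 1) \<in> gen_ideal (t (Suc k)) n"
  shows "x \<in> gen_ideal (t k) n"
proof -
  obtain d where d: "e = Suc (Suc d)" using e by (metis add_2_eq_Suc le_Suc_ex)
  define E where "E j = (if j < k then e else if j = k then e - 1 else 1)" for j
  define u where "u j = a j ^ E j" for j
  have reg_u: "regular_from u 0 n" unfolding u_def
    by (rule regular_powers[OF reg]) (use e in \<open>auto simp: E_def\<close>)
  obtain y where y: "x * a k ^ (e - 1) = (\<Sum>j<n. y j * t (Suc k) j)"
    using x unfolding gen_ideal_def by blast
  text \<open>Rewriting \<open>y\<close> as a relation among the \<open>u j\<close>, whose \<open>k\<close>-th coefficient is \<open>x - a k * y k\<close>.\<close>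
  define \<xi> where "\<xi> j = (if j = k then x - a k * y k else - y j)" for j
  have "\<xi> j * u j = (if j = k then x * a k ^ (e - 1) else 0) - y j * t (Suc k) j" for j
    by (cases "j < k"; cases "j = k") (auto simp: \<xi>_def u_def E_def t_def d algebra_simps)
  then have "(\<Sum>j<n. \<xi> j * u j) = 0"
    using kn by (simp add: sum_subtractf y[symmetric] sum.delta)
  then have "\<xi> k \<in> gen_ideal u n"
    using regular_relation_coeff[OF reg_u, of \<xi> k] kn by (simp add: gen_ideal_zero)
  moreover have "u j \<in> gen_ideal (t k) n" if "j < n" for j
    using gen_ideal_generator[OF kn, of "a k ^ d" "t k"] gen_ideal_generator[OF that, of 1 "t k"]
    by (cases "j < k"; cases "j = k") (auto simp: u_def E_def t_def d power_Suc2 simp del: power_Suc)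
  ultimately have "\<xi> k \<in> gen_ideal (t k) n" using gen_ideal_least by blast
  moreover have "a k * y k \<in> gen_ideal (t k) n"
    using gen_ideal_generator[OF kn, of "y k" "t k"] by (simp add: t_def mult.commute)
  ultimately show ?thesis using gen_ideal_add by (fastforce simp: \<xi>_def)
qed

lemma regular_colon_product:
  fixes a :: "nat \<Rightarrow> 'a::comm_ring_1"
  assumes reg: "regular_from a 0 n" and e: "2 \<le> e"
    and c: "c * (\<Prod>j<n. a j ^ (e - 1)) \<in> gen_ideal (\<lambda>j. a j ^ e) n"
  shows "c \<in> gen_ideal a n"
proof -
  define t where "t k = (\<lambda>j. if j < k then a j ^ e else a j)" for k
  have colon_t: "k \<le> n \<Longrightarrow> c * (\<Prod>j<k. a j ^ (e - 1)) \<in> gen_ideal (t k) n \<Longrightarrow> c \<in> gen_ideal a n"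
    for k
  proof (induction k)
    case 0
    then show ?case by (simp add: t_def)
  next
    case (Suc k)
    have "(c * (\<Prod>j<k. a j ^ (e - 1))) * a k ^ (e - 1) \<in> gen_ideal (t (Suc k)) n"
      using Suc.prems(2) by (simp add: mult.assoc)
    then have "c * (\<Prod>j<k. a j ^ (e - 1)) \<in> gen_ideal (t k) n"
      using colon_step[OF reg e _ t_def] Suc.prems(1) by simp
    then show ?case using Suc.IH Suc.prems(1) by simp
  qed
  have "gen_ideal (t n) n = gen_ideal (\<lambda>j. a j ^ e) n"
    by (rule gen_ideal_cong) (simp add: t_def)
  then show ?thesis using colon_t[of n] c by simp
qed

lemma of_nat_eq_zero_dvd:
  assumes "of_nat p = (0::'b::comm_semiring_1)" "p dvd m"
  shows "of_nat m = (0::'b)"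
  using assms by (auto elim!: dvdE)

lemma frobenius_add:
  fixes x y :: "'b::comm_ring_1"
  assumes p: "prime p" and char: "of_nat p = (0::'b)"
  shows "(x + y) ^ p = x ^ p + y ^ p"
proof -
  have p0: "p \<noteq> 0" using p by auto
  have binomial_term: "of_nat (p choose k) * x ^ k * y ^ (p - k) =
      (if k = p then x ^ p else 0) + (if k = 0 then y ^ p else 0)" if "k \<le> p" for k
  proof (cases "k = 0 \<or> k = p")
    case True
    then show ?thesis using p0 by auto
  next
    case False
    then have "p dvd (p choose k)" using dvd_choose_prime[of k p] that p p0 by auto
    then have "of_nat (p choose k) = (0::'b)" by (rule of_nat_eq_zero_dvd[OF char])
    then show ?thesis using False by simp
  qed
  have "(x + y) ^ p = (\<Sum>k\<le>p. of_nat (p choose k) * x ^ k * y ^ (p - k))"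
    by (rule binomial_ring)
  also have "\<dots> = (\<Sum>k\<le>p. (if k = p then x ^ p else 0) + (if k = 0 then y ^ p else 0))"
    by (rule sum.cong) (simp_all add: binomial_term)
  also have "\<dots> = x ^ p + y ^ p" by (simp add: sum.distrib)
  finally show ?thesis .
qed

lemma frobenius_sum:
  fixes g :: "'c \<Rightarrow> 'b::comm_ring_1"
  assumes p: "prime p" and char: "of_nat p = (0::'b)" and S: "finite S"
  shows "(\<Sum>s\<in>S. g s) ^ p = (\<Sum>s\<in>S. g s ^ p)"
  using S
proof (induction S rule: finite_induct)
  case empty
  then show ?case using p by (simp add: prime_gt_0_nat zero_power)
next
  case (insert s S)
  then show ?case by (simp add: frobenius_add[OF p char])
qed

abbreviation lookup :: "('b \<Rightarrow>\<^sub>0 'c::zero) \<Rightarrow> 'b \<Rightarrow> 'c" where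
  "lookup \<equiv> Poly_Mapping.lookup"

abbreviation keys :: "('b \<Rightarrow>\<^sub>0 'c::zero) \<Rightarrow> 'b set" where
  "keys \<equiv> Poly_Mapping.keys"

lemma mpoly_monomial_expansion: "F = (\<Sum>k\<in>keys F. Poly_Mapping.single k (lookup F k))"
  by (rule poly_mapping_eqI) (auto simp: lookup_sum lookup_single when_def in_keys_iff sum.delta)

lemma single_power:
  "\<exists>K. Poly_Mapping.single k c ^ m = Poly_Mapping.single K (c ^ m) \<and>
       (\<forall>j. lookup K j = m * lookup k j)"
proof (induction m)
  case 0
  show ?case by (rule exI[of _ 0]) simp
next
  case (Suc m)
  then obtain K where "Poly_Mapping.single k c ^ m = Poly_Mapping.single K (c ^ m)"
    "\<forall>j. lookup K j = m * lookup k j" by blast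
  then show ?case by (intro exI[of _ "k + K"]) (simp add: mult_single lookup_add)
qed

definition pairing :: "((nat \<Rightarrow>\<^sub>0 nat) \<Rightarrow> 'a) \<Rightarrow> 'a mpoly \<Rightarrow> 'a::comm_ring_1" where
  "pairing w F = (\<Sum>k\<in>keys F. lookup F k * w k)"

lemma pairing_superset:
  assumes "finite S" "keys F \<subseteq> S"
  shows "pairing w F = (\<Sum>k\<in>S. lookup F k * w k)"
  unfolding pairing_def
  by (rule sum.mono_neutral_left) (use assms in \<open>auto simp: in_keys_iff\<close>)

lemma pairing_add: "pairing w (P + Q) = pairing w P + pairing w Q"
proof -
  let ?S = "keys P \<union> keys Q"
  have "pairing w (P + Q) = (\<Sum>k\<in>?S. lookup (P + Q) k * w k)"
    by (rule pairing_superset) (use keys_add[of P Q] in auto)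
  also have "\<dots> = (\<Sum>k\<in>?S. lookup P k * w k) + (\<Sum>k\<in>?S. lookup Q k * w k)"
    by (simp add: lookup_add distrib_right sum.distrib)
  also have "\<dots> = pairing w P + pairing w Q"
    by (subst (1 2) pairing_superset[of ?S]) auto
  finally show ?thesis .
qed

lemma pairing_diff: "pairing w (P - Q) = pairing w P - pairing w Q"
  using pairing_add[of w "P - Q" Q] by simp

lemma pairing_sum: "finite S \<Longrightarrow> pairing w (\<Sum>s\<in>S. g s) = (\<Sum>s\<in>S. pairing w (g s))"
  by (induction S rule: finite_induct) (simp_all add: pairing_def[of w 0] pairing_add)

lemma pairing_single: "pairing w (Poly_Mapping.single k c) = c * w k"
  by (simp add: pairing_def)

lemma pairing_const_mult:
  "pairing w (const_mp c * H) = (\<Sum>m\<in>keys H. c * lookup H m * w m)"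
proof -
  have "const_mp c * H = (\<Sum>m\<in>keys H. Poly_Mapping.single m (c * lookup H m))"
    by (subst mpoly_monomial_expansion[of H]) (simp add: const_mp_def sum_distrib_left mult_single)
  then show ?thesis by (simp add: pairing_sum pairing_single)
qed

lemma pairing_pdiff: "pairing w (pdiff i H) =
    (\<Sum>m\<in>keys H. of_nat (lookup m i) * lookup H m * w (m - Poly_Mapping.single i 1))"
  by (simp add: pdiff_def pairing_sum pairing_single)

definition digit_weight :: "nat \<Rightarrow> (nat \<Rightarrow> 'a::comm_ring_1) \<Rightarrow> (nat \<Rightarrow>\<^sub>0 nat) \<Rightarrow> nat \<Rightarrow> 'a" where
  "digit_weight p a m j = of_nat (fact (lookup m j mod p)) * a j ^ (p - 1 - lookup m j mod p)"

definition dual_weight ::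
    "nat \<Rightarrow> nat \<Rightarrow> (nat \<Rightarrow> 'a::comm_ring_1) \<Rightarrow> (nat \<Rightarrow>\<^sub>0 nat) \<Rightarrow> (nat \<Rightarrow>\<^sub>0 nat) \<Rightarrow> 'a" where
  "dual_weight p n a r m =
     (if \<forall>j. lookup m j div p = lookup r j then \<Prod>j<n. digit_weight p a m j else 0)"

lemma div_mod_pred:
  fixes x p :: nat
  assumes "x mod p \<noteq> 0"
  shows "(x - 1) div p = x div p \<and> (x - 1) mod p = x mod p - 1"
proof (cases "p = 0")
  case True
  then show ?thesis by simp
next
  case p: False
  have "x - 1 = (x mod p - 1) + x div p * p" using assms by (simp add: add.commute)
  moreover have "x mod p - 1 < p" using p by (simp add: less_imp_diff_less)
  ultimately show ?thesis using p by simp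
qed

lemma prod_lessThan_split: "i < (n::nat) \<Longrightarrow> (\<Prod>j<n. g j) = g i * (\<Prod>j\<in>{..<n} - {i}. g j)"
  by (rule prod.remove) auto

text \<open>If the last digit of \<open>m i\<close> is nonzero, the weights of \<open>m\<close> and \<open>m - e_i\<close> are related by
  \<open>m i * w_r (m - e_i) = a i * w_r m\<close> (digit \<open>d\<close> drops to \<open>d - 1\<close> and \<open>d! = d * (d - 1)!\<close>).\<close>
lemma dual_weight_shift:
  fixes a :: "nat \<Rightarrow> 'a::comm_ring_1"
  assumes p: "0 < p" and char: "of_nat p = (0::'a)" and i: "i < n"
    and digit: "lookup m i mod p \<noteq> 0"
  shows "of_nat (lookup m i) * dual_weight p n a r (m - Poly_Mapping.single i 1)
         = a i * dual_weight p n a r m"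
proof -
  define m' where "m' = m - Poly_Mapping.single i 1"
  define d where "d = lookup m i mod p"
  have d0: "d \<noteq> 0" and dp: "d < p" using digit p by (auto simp: d_def)
  have lookup_m': "lookup m' j = (if j = i then lookup m i - 1 else lookup m j)" for j
    by (simp add: m'_def lookup_minus lookup_single when_def)
  have pred: "lookup m' i div p = lookup m i div p" "lookup m' i mod p = d - 1"
    using div_mod_pred[OF digit] by (simp_all add: lookup_m' d_def)
  have same_block: "(\<forall>j. lookup m' j div p = lookup r j) \<longleftrightarrow> (\<forall>j. lookup m j div p = lookup r j)"
    using pred(1) by (auto simp: lookup_m' split: if_splits)
  have of_nat_m: "of_nat (lookup m i) = (of_nat d :: 'a)"
  proof -
    have "lookup m i = d + (lookup m i div p) * p" by (simp add: d_def)
    then have "(of_nat (lookup m i) :: 'a) = of_nat d + of_nat (lookup m i div p) * of_nat p"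
      by (metis of_nat_add of_nat_mult)
    then show ?thesis using char by simp
  qed
  have others: "(\<Prod>j\<in>{..<n} - {i}. digit_weight p a m' j) = (\<Prod>j\<in>{..<n} - {i}. digit_weight p a m j)"
    by (rule prod.cong) (auto simp: digit_weight_def lookup_m')
  have digit_i: "of_nat d * digit_weight p a m' i = a i * digit_weight p a m i"
  proof -
    have "(of_nat (fact d) :: 'a) = of_nat d * of_nat (fact (d - 1))"
      using d0 by (simp add: fact_reduce)
    moreover have "a i ^ (p - 1 - (d - 1)) = a i * a i ^ (p - 1 - d)"
      using d0 dp by (simp add: Suc_diff_Suc power_Suc[symmetric])
    ultimately show ?thesis
      by (simp add: digit_weight_def pred(2) d_def[symmetric] mult_ac)
  qed
  have "of_nat d * (digit_weight p a m' i * (\<Prod>j\<in>{..<n} - {i}. digit_weight p a m j))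
      = a i * (digit_weight p a m i * (\<Prod>j\<in>{..<n} - {i}. digit_weight p a m j))"
    by (simp only: mult.assoc[symmetric] digit_i)
  then show ?thesis
    unfolding m'_def[symmetric] dual_weight_def same_block of_nat_m
    by (simp add: prod_lessThan_split[OF i] others)
qed

lemma dual_weight_digit_zero:
  fixes a :: "nat \<Rightarrow> 'a::comm_ring_1"
  assumes p: "0 < p" and i: "i < n" and digit: "lookup m i mod p = 0"
  shows "a i * dual_weight p n a r m \<in> gen_ideal (\<lambda>j. a j ^ p) n"
proof (cases "\<forall>j. lookup m j div p = lookup r j")
  case True
  have "a i * digit_weight p a m i = a i ^ p"
    using digit p by (cases p) (simp_all add: digit_weight_def)
  then have "a i * dual_weight p n a r m = (\<Prod>j\<in>{..<n} - {i}. digit_weight p a m j) * a i ^ p"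
    using True by (simp add: dual_weight_def prod_lessThan_split[OF i] mult.assoc[symmetric] mult.commute)
  then show ?thesis using gen_ideal_generator[OF i] by simp
next
  case False
  then show ?thesis unfolding dual_weight_def by (simp only: if_False mult_zero_right gen_ideal_zero)
qed

lemma dual_weight_D_coeff:
  fixes a :: "nat \<Rightarrow> 'a::comm_ring_1"
  assumes p: "prime p" and char: "of_nat p = (0::'a)" and i: "i < n"
  shows "of_nat (lookup m i) * dual_weight p n a r (m - Poly_Mapping.single i 1)
           - a i * dual_weight p n a r m \<in> gen_ideal (\<lambda>j. a j ^ p) n"
proof (cases "lookup m i mod p = 0")
  case True
  then have "of_nat (lookup m i) = (0::'a)" by (intro of_nat_eq_zero_dvd[OF char]) auto
  then show ?thesis
    using dual_weight_digit_zero[OF prime_gt_0_nat[OF p] i True] gen_ideal_diff[OF gen_ideal_zero]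
    by fastforce
next
  case False
  then show ?thesis using dual_weight_shift[OF prime_gt_0_nat[OF p] char i False] by (simp add: gen_ideal_zero)
qed

lemma pairing_D_map:
  fixes a :: "nat \<Rightarrow> 'a::comm_ring_1"
  assumes p: "prime p" and char: "of_nat p = (0::'a)"
  shows "pairing (dual_weight p n a r) (D_map n a h) \<in> gen_ideal (\<lambda>j. a j ^ p) n"
proof -
  let ?w = "dual_weight p n a r"
  have "pairing ?w (D_map n a h) =
      (\<Sum>i<n. pairing ?w (pdiff i (h i)) - pairing ?w (const_mp (a i) * h i))"
    by (simp add: D_map_def pairing_sum pairing_diff)
  also have "\<dots> = (\<Sum>i<n. \<Sum>m\<in>keys (h i). lookup (h i) m *
      (of_nat (lookup m i) * ?w (m - Poly_Mapping.single i 1) - a i * ?w m))"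
    unfolding pairing_pdiff pairing_const_mult sum_subtractf[symmetric]
    by (intro sum.cong refl) (simp add: algebra_simps)
  also have "\<dots> \<in> gen_ideal (\<lambda>j. a j ^ p) n"
    by (intro gen_ideal_sum gen_ideal_mult dual_weight_D_coeff[OF p char]) auto
  finally show ?thesis .
qed

text \<open>Computation (2): by Frobenius \<open>f ^ p = \<Sum>m. c_m ^ p z ^ (p m)\<close>, and \<open>w_r\<close> picks out
  the single term \<open>m = r\<close>, where all digits vanish.\<close>
lemma pairing_frobenius_power:
  fixes a :: "nat \<Rightarrow> 'a::comm_ring_1"
  assumes p: "prime p" and char: "of_nat p = (0::'a)"
  shows "pairing (dual_weight p n a r) (f ^ p) = lookup f r ^ p * (\<Prod>j<n. a j ^ (p - 1))"
proof -
  have p0: "0 < p" using p by (simp add: prime_gt_0_nat)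
  define P where "P = (\<Prod>j<n. a j ^ (p - 1))"
  have char_mpoly: "of_nat p = (0::'a mpoly)" by (metis char single_of_nat single_zero)
  have "f ^ p = (\<Sum>k\<in>keys f. Poly_Mapping.single k (lookup f k)) ^ p"
    by (subst mpoly_monomial_expansion[of f]) simp
  also have "\<dots> = (\<Sum>k\<in>keys f. Poly_Mapping.single k (lookup f k) ^ p)"
    by (rule frobenius_sum[OF p char_mpoly]) simp
  finally have fp: "f ^ p = (\<Sum>k\<in>keys f. Poly_Mapping.single k (lookup f k) ^ p)" .
  have monomial: "pairing (dual_weight p n a r) (Poly_Mapping.single k c ^ p) =
      (if k = r then c ^ p * P else 0)" for k c
  proof -
    obtain K where K: "Poly_Mapping.single k c ^ p = Poly_Mapping.single K (c ^ p)"
      "\<forall>j. lookup K j = p * lookup k j" using single_power by blast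
    have "(\<forall>j. lookup K j div p = lookup r j) \<longleftrightarrow> k = r"
      using K(2) p0 by (auto intro: poly_mapping_eqI)
    moreover have "digit_weight p a K j = a j ^ (p - 1)" for j using K(2) by (simp add: digit_weight_def)
    ultimately have "dual_weight p n a r K = (if k = r then P else 0)"
      unfolding dual_weight_def P_def by simp
    then show ?thesis unfolding K(1) pairing_single by simp
  qed
  have "pairing (dual_weight p n a r) (f ^ p) =
      (\<Sum>k\<in>keys f. if k = r then lookup f k ^ p * P else 0)"
    unfolding fp by (simp add: pairing_sum monomial)
  also have "\<dots> = lookup f r ^ p * P"
    using p0 by (simp add: sum.delta in_keys_iff zero_power)
  finally show ?thesis unfolding P_def .
qed

theorem corollary2p6:
  fixes p n :: nat and a :: "nat \<Rightarrow> 'a::comm_ring_1" and f :: "'a mpoly"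
  assumes "prime p"
    and "of_nat p = (0::'a)"
    and "regular_seq a n"
    and "in_vars n f"
    and "\<exists>h. (\<forall>i<n. in_vars n (h i)) \<and> f ^ p = D_map n a h"
  shows "\<forall>r. (Poly_Mapping.lookup f r) ^ p \<in> gen_ideal a n"
proof
  fix r
  obtain h where h: "f ^ p = D_map n a h" using assms(5) by blast
  have "lookup f r ^ p * (\<Prod>j<n. a j ^ (p - 1)) \<in> gen_ideal (\<lambda>j. a j ^ p) n"
    using pairing_D_map[OF assms(1,2), of n a r h] pairing_frobenius_power[OF assms(1,2), of n a r f]
    by (simp add: h)
  moreover have "regular_from a 0 n"
    using assms(3) unfolding regular_seq_def regular_from_def by blast
  moreover have "2 \<le> p" using assms(1) by (simp add: prime_ge_2_nat)
  ultimately show "lookup f r ^ p \<in> gen_ideal a n" using regular_colon_product by blast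
qed

end
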